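(* Let $\mathcal G_1$ and $\mathcal G_2$ be digraphs of two dynamic systems. Suppose $\mathcal G_2$ has a single input node $k_2^1$ and is structurally controllable; the structural controllability of $\mathcal G_1$ is unknown. Suppose there exists a directed path starting from some input node $k_1^1$ of $\mathcal G_1$ and ending at $k_2^1$. Form the graph consisting of: - the nodes of this path together with the nodes of $\mathcal G_2$; - the edges of the path together with the edges of $\mathcal G_2$; - a single input at the initial node $k_1^1$ of the path. Then this graph is structurally controllable.
   Context: A directed path is a sequence of edges where each edge's terminal node is the next edge's initial node, with no repeated nodes. For a digraph, $A=[a_{ij}]$ denotes the weight matrix, with $a_{ij}\ne 0$ iff there is an edge from $j$ to $i$; inputs at node $k$ correspond to columns $b\,\bm e_k$ of the input matrix $B$. A graph with designated input nodes is structurally controllable if there is a choice of nonzero values for its edge weights and input gains such that the resulting pair $(A,B)$ is controllable (equivalently, there is a controllable pair with the same zero/nonzero pattern as $(A,B)$). *)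

theory Defs
  imports Complex_Main
begin

text \<open>Digraphs on node sets of a type 'a. An edge (j, i) is an edge from node j to node i.\<close>

definition digraph :: "'a set \<Rightarrow> ('a \<times> 'a) set \<Rightarrow> bool" where
  "digraph V E \<longleftrightarrow> finite V \<and> E \<subseteq> V \<times> V"

definition weight_pattern :: "'a set \<Rightarrow> ('a \<times> 'a) set \<Rightarrow> ('a \<Rightarrow> 'a \<Rightarrow> real) \<Rightarrow> bool" where
  "weight_pattern V E A \<longleftrightarrow> (\<forall>i\<in>V. \<forall>j\<in>V. A i j \<noteq> 0 \<longleftrightarrow> (j, i) \<in> E)"

definition input_pattern :: "'a set \<Rightarrow> 'a set \<Rightarrow> ('a \<Rightarrow> 'a \<Rightarrow> real) \<Rightarrow> bool" where
  "input_pattern V K B \<longleftrightarrow> (\<forall>i\<in>V. \<forall>k\<in>K. B i k \<noteq> 0 \<longleftrightarrow> i = k)"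

definition mvec :: "'a set \<Rightarrow> ('a \<Rightarrow> 'a \<Rightarrow> real) \<Rightarrow> ('a \<Rightarrow> real) \<Rightarrow> ('a \<Rightarrow> real)" where
  "mvec V A x = (\<lambda>i. \<Sum>j\<in>V. A i j * x j)"

text \<open>Kalman rank condition: the columns of [B, AB, ..., A^(n-1) B] (n = |V|) span R^V.\<close>
definition controllable :: "'a set \<Rightarrow> 'a set \<Rightarrow> ('a \<Rightarrow> 'a \<Rightarrow> real) \<Rightarrow> ('a \<Rightarrow> 'a \<Rightarrow> real) \<Rightarrow> bool" where
  "controllable V K A B \<longleftrightarrow>
     (\<forall>x :: 'a \<Rightarrow> real. \<exists>c :: nat \<Rightarrow> 'a \<Rightarrow> real.
        \<forall>i\<in>V. x i = (\<Sum>t<card V. \<Sum>k\<in>K. c t k * ((mvec V A ^^ t) (\<lambda>l. B l k)) i))"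

definition structurally_controllable :: "'a set \<Rightarrow> ('a \<times> 'a) set \<Rightarrow> 'a set \<Rightarrow> bool" where
  "structurally_controllable V E K \<longleftrightarrow>
     (\<exists>A B. weight_pattern V E A \<and> input_pattern V K B \<and> controllable V K A B)"

definition path_edges :: "'a list \<Rightarrow> ('a \<times> 'a) set" where
  "path_edges ps = set (zip ps (tl ps))"

definition directed_path :: "'a list \<Rightarrow> bool" where
  "directed_path ps \<longleftrightarrow> ps \<noteq> [] \<and> distinct ps"

end

theory Submission
  imports Defs
begin

text \<open>Give every path edge weight 1 and keep the weights of \<open>\<G>\<^sub>2\<close>. An input \<open>b\<close> at the
  head of the path is shifted one node per step along the path, so the first \<open>m\<close> Krylov
  vectors are \<open>b e\<^sub>v\<close> for the \<open>m\<close> path nodes \<open>v\<close> outside \<open>\<G>\<^sub>2\<close>. At step \<open>m\<close> the input reaches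
  \<open>k\<^sub>2\<close>, and since no edge leaves \<open>\<G>\<^sub>2\<close>, the remaining \<open>|V\<^sub>2|\<close> Krylov vectors are those of
  \<open>\<G>\<^sub>2\<close> (with input gain \<open>b\<close>) extended by zero. Together they span \<open>\<real>\<^sup>V\<close>.\<close>

lemma sum_lessThan_add:
  "(\<Sum>t<m + n. f t) = (\<Sum>t<m. f t) + (\<Sum>s<n. f (m + s :: nat))"
  by (induction n) (simp_all add: add_ac)

lemma mem_path_edges_iff:
  "(a, b) \<in> path_edges ps \<longleftrightarrow> (\<exists>t. Suc t < length ps \<and> a = ps ! t \<and> b = ps ! Suc t)"
  unfolding path_edges_def set_zip
  by (auto simp: nth_tl) (metis Suc_lessD less_diff_conv add_Suc_right add_0_right)

lemma nth_in_set_butlast: "Suc t < length xs \<Longrightarrow> xs ! t \<in> set (butlast xs)"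
  by (metis Suc_lessE diff_Suc_1 length_butlast nth_butlast nth_mem)

lemma mvec_delta:
  assumes "finite V" "a \<in> V"
  shows "mvec V A (\<lambda>l. if l = a then b else 0) = (\<lambda>i. A i a * b)"
  using assms by (simp add: mvec_def if_distrib sum.delta' cong: if_cong)

lemma mvec_pow_along_path:
  assumes "finite V" "set ps \<subseteq> V" "t < length ps"
    and column: "\<And>t i. Suc t < length ps \<Longrightarrow> A i (ps ! t) = (if i = ps ! Suc t then 1 else 0)"
  shows "(mvec V A ^^ t) (\<lambda>l. if l = ps ! 0 then b else 0) = (\<lambda>l. if l = ps ! t then b else 0)"
  using assms(3)
proof (induction t)
  case (Suc t)
  have "ps ! t \<in> V" using Suc.prems assms(2) by (auto dest: nth_mem)
  with Suc show ?case by (auto simp: mvec_delta[OF assms(1)] column)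
qed simp

lemma mvec_pow_cong:
  assumes "\<And>j. j \<in> W \<Longrightarrow> f j = g j" "i \<in> W"
  shows "(mvec W A ^^ s) f i = (mvec W A ^^ s) g i"
proof (cases s)
  case (Suc n)
  have "mvec W A f = mvec W A g"
    unfolding mvec_def using assms(1) by (intro ext sum.cong) auto
  with Suc show ?thesis by (simp only: funpow_Suc_right comp_apply)
qed (simp add: assms)

lemma mvec_extend_by_zero:
  assumes "finite V" "W \<subseteq> V"
    and block: "\<And>i j. j \<in> W \<Longrightarrow> A i j = (if i \<in> W then A' i j else 0)"
  shows "mvec V A (\<lambda>l. if l \<in> W then g l else 0) = (\<lambda>i. if i \<in> W then mvec W A' g i else 0)"
proof
  fix i
  have "mvec V A (\<lambda>l. if l \<in> W then g l else 0) i = (\<Sum>j\<in>V. if j \<in> W then A i j * g j else 0)"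
    unfolding mvec_def by (intro sum.cong) auto
  also have "\<dots> = (\<Sum>j\<in>W. A i j * g j)"
    using assms(1,2) by (simp add: sum.inter_restrict[symmetric] Int_absorb1)
  also have "\<dots> = (if i \<in> W then mvec W A' g i else 0)"
    by (simp add: block mvec_def)
  finally show "mvec V A (\<lambda>l. if l \<in> W then g l else 0) i = (if i \<in> W then mvec W A' g i else 0)" .
qed

lemma mvec_pow_extend_by_zero:
  assumes "finite V" "W \<subseteq> V"
    and "\<And>i j. j \<in> W \<Longrightarrow> A i j = (if i \<in> W then A' i j else 0)"
  shows "(mvec V A ^^ s) (\<lambda>l. if l \<in> W then g l else 0)
       = (\<lambda>i. if i \<in> W then (mvec W A' ^^ s) g i else 0)"
  by (induction s) (auto simp: mvec_extend_by_zero[OF assms])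

lemma controllable_single_input_iff:
  "controllable V {k} A B \<longleftrightarrow>
     (\<forall>x. \<exists>c :: nat \<Rightarrow> real. \<forall>i\<in>V. x i = (\<Sum>t<card V. c t * (mvec V A ^^ t) (\<lambda>l. B l k) i))"
  unfolding controllable_def
proof (intro iffI allI)
  fix x :: "'a \<Rightarrow> real"
  assume "\<forall>x. \<exists>c. \<forall>i\<in>V. x i = (\<Sum>t<card V. \<Sum>k\<in>{k}. c t k * (mvec V A ^^ t) (\<lambda>l. B l k) i)"
  then obtain c where "\<forall>i\<in>V. x i = (\<Sum>t<card V. \<Sum>k\<in>{k}. c t k * (mvec V A ^^ t) (\<lambda>l. B l k) i)"
    by blast
  then show "\<exists>c. \<forall>i\<in>V. x i = (\<Sum>t<card V. c t * (mvec V A ^^ t) (\<lambda>l. B l k) i)"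
    by (intro exI[of _ "\<lambda>t. c t k"]) simp
next
  fix x :: "'a \<Rightarrow> real"
  assume "\<forall>x. \<exists>c. \<forall>i\<in>V. x i = (\<Sum>t<card V. c t * (mvec V A ^^ t) (\<lambda>l. B l k) i)"
  then obtain c where "\<forall>i\<in>V. x i = (\<Sum>t<card V. c t * (mvec V A ^^ t) (\<lambda>l. B l k) i)"
    by blast
  then show "\<exists>c. \<forall>i\<in>V. x i = (\<Sum>t<card V. \<Sum>k\<in>{k}. c t k * (mvec V A ^^ t) (\<lambda>l. B l k) i)"
    by (intro exI[of _ "\<lambda>t _. c t"]) simp
qed

lemma span_cascade:
  fixes v u :: "nat \<Rightarrow> 'a \<Rightarrow> real" and p :: "nat \<Rightarrow> 'a"
  assumes "card V = m + card W" "W \<subseteq> V" "b \<noteq> 0"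
    and p: "inj_on p {..<m}" "p ` {..<m} = V - W"
    and head: "\<And>t i. t < m \<Longrightarrow> v t i = (if i = p t then b else 0)"
    and tail: "\<And>s i. v (m + s) i = (if i \<in> W then u s i else 0)"
    and u_spans: "\<forall>x. \<exists>c. \<forall>i\<in>W. x i = (\<Sum>s<card W. c s * u s i)"
  shows "\<forall>x. \<exists>c. \<forall>i\<in>V. x i = (\<Sum>t<card V. c t * v t i)"
proof
  fix x :: "'a \<Rightarrow> real"
  obtain c\<^sub>W where c\<^sub>W: "\<forall>i\<in>W. x i = (\<Sum>s<card W. c\<^sub>W s * u s i)"
    using u_spans by blast
  define c where "c t = (if t < m then x (p t) / b else c\<^sub>W (t - m))" for t
  have "x i = (\<Sum>t<card V. c t * v t i)" if "i \<in> V" for i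
  proof -
    have head_sum: "(\<Sum>t<m. c t * v t i) = (if i \<in> W then 0 else x i)"
    proof (cases "i \<in> W")
      case False
      then obtain r where r: "r < m" "i = p r" using p(2) \<open>i \<in> V\<close> by blast
      have "(\<Sum>t<m. c t * v t i) = (\<Sum>t<m. if t = r then x i else 0)"
        using r p(1) \<open>b \<noteq> 0\<close> by (intro sum.cong) (auto simp: head c_def inj_on_eq_iff)
      with r False show ?thesis by simp
    qed (use p(2) in \<open>auto simp: head intro!: sum.neutral\<close>)
    have tail_sum: "(\<Sum>s<card W. c (m + s) * v (m + s) i) = (if i \<in> W then x i else 0)"
      using c\<^sub>W by (simp add: tail c_def)
    show ?thesis
      unfolding assms(1) sum_lessThan_add head_sum tail_sum by simp
  qed
  then show "\<exists>c. \<forall>i\<in>V. x i = (\<Sum>t<card V. c t * v t i)" by blast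
qed

definition path_extension :: "'a list \<Rightarrow> 'a set \<Rightarrow> ('a \<Rightarrow> 'a \<Rightarrow> real) \<Rightarrow> 'a \<Rightarrow> 'a \<Rightarrow> real" where
  "path_extension ps W A' i j =
     (if j \<in> W then (if i \<in> W then A' i j else 0)
      else if (j, i) \<in> path_edges ps then 1 else 0)"

lemma path_extension_path_column:
  assumes "distinct ps" "Suc t < length ps" "ps ! t \<notin> W"
  shows "path_extension ps W A' i (ps ! t) = (if i = ps ! Suc t then 1 else 0)"
proof -
  have "(ps ! t, i) \<in> path_edges ps \<longleftrightarrow> i = ps ! Suc t"
    using assms(1,2) by (auto simp: mem_path_edges_iff nth_eq_iff_index_eq)
  with assms(3) show ?thesis by (simp add: path_extension_def)
qed

lemma weight_pattern_path_extension:
  assumes "weight_pattern W E A'" "E \<subseteq> W \<times> W"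
    and outside: "\<forall>v\<in>set (butlast ps). v \<notin> W"
  shows "weight_pattern (set ps \<union> W) (path_edges ps \<union> E) (path_extension ps W A')"
proof -
  have "j \<notin> W" if edge: "(j, i) \<in> path_edges ps" for i j
  proof -
    obtain t where "Suc t < length ps" "j = ps ! t"
      using edge unfolding mem_path_edges_iff by blast
    with outside show ?thesis by (auto dest: nth_in_set_butlast)
  qed
  with assms(1,2) show ?thesis
    by (auto simp: weight_pattern_def path_extension_def)
qed

lemma krylov_path_extension:
  fixes A' :: "'a \<Rightarrow> 'a \<Rightarrow> real" and b :: real
  assumes "finite W" "ps \<noteq> []" "distinct ps" "last ps \<in> W"
    and outside: "\<forall>v\<in>set (butlast ps). v \<notin> W"
  defines "V \<equiv> set ps \<union> W" and "A \<equiv> path_extension ps W A'"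
  defines "\<delta> \<equiv> \<lambda>a l. if l = a then b else 0"
  shows krylov_path_head: "t < length ps \<Longrightarrow> (mvec V A ^^ t) (\<delta> (hd ps)) = \<delta> (ps ! t)"
    and krylov_path_tail: "(mvec V A ^^ (length ps - 1 + s)) (\<delta> (hd ps))
          = (\<lambda>i. if i \<in> W then (mvec W A' ^^ s) (\<delta> (last ps)) i else 0)"
proof -
  have V: "finite V" "set ps \<subseteq> V" "W \<subseteq> V" using assms(1) by (auto simp: V_def)
  have "ps ! t \<notin> W" if "Suc t < length ps" for t
    using that outside by (auto dest: nth_in_set_butlast)
  then have column: "A i (ps ! t) = (if i = ps ! Suc t then 1 else 0)" if "Suc t < length ps" for t i
    using that assms(3) by (simp add: A_def path_extension_path_column)
  show head: "(mvec V A ^^ t) (\<delta> (hd ps)) = \<delta> (ps ! t)" if "t < length ps" for t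
    using mvec_pow_along_path[OF V(1,2) that column] assms(2) by (simp add: \<delta>_def hd_conv_nth)
  have "(mvec V A ^^ (length ps - 1)) (\<delta> (hd ps)) = (\<lambda>l. if l \<in> W then \<delta> (last ps) l else 0)"
    using head[of "length ps - 1"] assms(2,4) by (auto simp: \<delta>_def last_conv_nth)
  moreover have "\<And>i j. j \<in> W \<Longrightarrow> A i j = (if i \<in> W then A' i j else 0)"
    by (simp add: A_def path_extension_def)
  ultimately show "(mvec V A ^^ (length ps - 1 + s)) (\<delta> (hd ps))
          = (\<lambda>i. if i \<in> W then (mvec W A' ^^ s) (\<delta> (last ps)) i else 0)"
    by (simp add: add.commute[of _ s] funpow_add mvec_pow_extend_by_zero[OF V(1,3)])
qed

lemma path_nodes_outside:
  assumes "finite W" "xs \<noteq> []" "distinct xs" "last xs \<in> W"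
    and outside: "\<forall>v\<in>set (butlast xs). v \<notin> W"
  shows "card (set xs \<union> W) = (length xs - 1) + card W"
    and "inj_on (nth xs) {..<length xs - 1}"
    and "nth xs ` {..<length xs - 1} = set xs \<union> W - W"
proof -
  have "set xs = insert (last xs) (set (butlast xs))"
    using assms(2) by (metis append_butlast_last_id Un_insert_right set_append list.set
        sup_bot.right_neutral)
  then have butlast: "set (butlast xs) = set xs \<union> W - W"
    using assms(4) outside by auto
  have "card (set xs \<union> W - W) = length xs - 1"
    using assms(3) by (simp add: butlast[symmetric] distinct_card distinct_butlast)
  then show "card (set xs \<union> W) = (length xs - 1) + card W"
    using assms(1) card_mono[of "set xs \<union> W" W] by (simp add: card_Diff_subset)
  show "inj_on (nth xs) {..<length xs - 1}"
    using assms(3) by (auto intro: inj_on_nth)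
  show "nth xs ` {..<length xs - 1} = set xs \<union> W - W"
    by (simp add: atLeast0LessThan[symmetric] nth_image butlast_conv_take flip: butlast)
qed

lemma controllable_path_extension:
  assumes "finite W" "ps \<noteq> []" "distinct ps" "last ps \<in> W"
    and outside: "\<forall>v\<in>set (butlast ps). v \<notin> W"
    and B': "input_pattern W {last ps} B'" and ctr': "controllable W {last ps} A' B'"
  shows "controllable (set ps \<union> W) {hd ps} (path_extension ps W A')
           (\<lambda>i k. if i = hd ps then B' (last ps) (last ps) else 0)"
proof -
  define b where "b = B' (last ps) (last ps)"
  define \<delta> where "\<delta> a = (\<lambda>l. if l = a then b else 0)" for a :: 'a
  have "b \<noteq> 0" and B'_col: "\<And>l. l \<in> W \<Longrightarrow> B' l (last ps) = \<delta> (last ps) l"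
    using B' assms(4) by (auto simp: input_pattern_def b_def \<delta>_def)
  define V where "V = set ps \<union> W"
  define A where "A = path_extension ps W A'"
  define m where "m = length ps - 1"
  have "card V = m + card W" "inj_on (nth ps) {..<m}" "nth ps ` {..<m} = V - W"
    using path_nodes_outside[OF assms(1-5)] by (simp_all add: V_def m_def)
  moreover have "(mvec V A ^^ t) (\<delta> (hd ps)) = \<delta> (ps ! t)" if "t < m" for t
    using krylov_path_head[OF assms(1-5)] that by (simp add: V_def A_def \<delta>_def m_def)
  moreover have "(mvec V A ^^ (m + s)) (\<delta> (hd ps)) i
      = (if i \<in> W then (mvec W A' ^^ s) (\<lambda>l. B' l (last ps)) i else 0)" for s i
  proof -
    have "(mvec W A' ^^ s) (\<lambda>l. B' l (last ps)) i = (mvec W A' ^^ s) (\<delta> (last ps)) i" if "i \<in> W"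
      using B'_col that by (rule mvec_pow_cong)
    then show ?thesis
      using krylov_path_tail[OF assms(1-5), where A'=A' and b=b and s=s]
      by (simp add: V_def A_def \<delta>_def m_def)
  qed
  moreover have "\<forall>x. \<exists>c. \<forall>i\<in>W. x i = (\<Sum>s<card W. c s * (mvec W A' ^^ s) (\<lambda>l. B' l (last ps)) i)"
    using ctr' by (simp add: controllable_single_input_iff)
  ultimately have "\<forall>x. \<exists>c. \<forall>i\<in>V. x i = (\<Sum>t<card V. c t * (mvec V A ^^ t) (\<delta> (hd ps)) i)"
    using \<open>b \<noteq> 0\<close> by (intro span_cascade[of V m W b "nth ps"]) (auto simp: V_def \<delta>_def)
  then have "controllable V {hd ps} A (\<lambda>i k. \<delta> (hd ps) i)"
    by (simp add: controllable_single_input_iff)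
  moreover have "(\<lambda>i k :: 'a. \<delta> (hd ps) i) = (\<lambda>i k. if i = hd ps then B' (last ps) (last ps) else 0)"
    unfolding \<delta>_def b_def ..
  ultimately show ?thesis
    by (simp add: V_def A_def)
qed

theorem theorem5:
  fixes V1 V2 :: "'a set" and E1 E2 :: "('a \<times> 'a) set" and K1 :: "'a set"
    and k2 :: 'a and ps :: "'a list"
  assumes "digraph V1 E1" and "K1 \<subseteq> V1"
    and "digraph V2 E2" and "k2 \<in> V2"
    and "V1 \<inter> V2 = {}"
    and "structurally_controllable V2 E2 {k2}"
    and "directed_path ps" and "hd ps \<in> K1" and "last ps = k2"
    and "\<forall>v\<in>set (butlast ps). v \<notin> V2"
  shows "structurally_controllable (set ps \<union> V2) (path_edges ps \<union> E2) {hd ps}"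
proof -
  have ps: "ps \<noteq> []" "distinct ps" using assms(7) by (auto simp: directed_path_def)
  have V2: "finite V2" "E2 \<subseteq> V2 \<times> V2" using assms(3) by (auto simp: digraph_def)
  obtain A2 B2 where A2: "weight_pattern V2 E2 A2" and B2: "input_pattern V2 {k2} B2"
    and ctr2: "controllable V2 {k2} A2 B2"
    using assms(6) by (auto simp: structurally_controllable_def)
  define B where "B = (\<lambda>i k :: 'a. if i = hd ps then B2 k2 k2 else 0)"
  have "weight_pattern (set ps \<union> V2) (path_edges ps \<union> E2) (path_extension ps V2 A2)"
    using A2 V2(2) assms(10) by (rule weight_pattern_path_extension)
  moreover have "input_pattern (set ps \<union> V2) {hd ps} B"
    using B2 assms(4) by (simp add: input_pattern_def B_def)
  moreover have "controllable (set ps \<union> V2) {hd ps} (path_extension ps V2 A2) B"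
    using controllable_path_extension[OF V2(1) ps, where A'=A2 and B'=B2] assms(4,9,10) B2 ctr2
    unfolding B_def assms(9)[symmetric] by simp
  ultimately show ?thesis
    unfolding structurally_controllable_def by blast
qed

end
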